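(* Let $\gamma$ be an admissible path and let $t<s<t+\pi$ be in the domain of $\gamma$. Then the angle between the vector $\gamma'(t)$ and the ray from $\gamma(t)$ through $\gamma(s)$ is at most $\frac{s-t}{2}$.
   Context: An admissible path is a continuously differentiable planar curve $\gamma$ parameterized by arclength (so $\gamma'(t)$ is a unit tangent vector) such that for all $t<s<t+\pi$ in its domain, the angle $\alpha(s,t)$ between the directions $\gamma'(s)$ and $\gamma'(t)$ satisfies $\alpha(s,t)\le s-t$. *)

theory Defs
  imports "HOL-Analysis.Analysis"
begin

definition vec_angle :: "complex \<Rightarrow> complex \<Rightarrow> real" where
  "vec_angle u v = arccos ((u \<bullet> v) / (norm u * norm v))"

definition admissible :: "(real \<Rightarrow> complex) \<Rightarrow> real set \<Rightarrow> bool" where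
  "admissible \<gamma> I \<longleftrightarrow>
     is_interval I \<and>
     (\<forall>t\<in>I. \<gamma> differentiable (at t within I)) \<and>
     continuous_on I (\<lambda>t. vector_derivative \<gamma> (at t within I)) \<and>
     (\<forall>t\<in>I. norm (vector_derivative \<gamma> (at t within I)) = 1) \<and>
     (\<forall>t\<in>I. \<forall>s\<in>I. t < s \<and> s < t + pi \<longrightarrow>
        vec_angle (vector_derivative \<gamma> (at s within I))
                  (vector_derivative \<gamma> (at t within I)) \<le> s - t)"

end

theory Submission
  imports Defs
begin

text \<open>Multiply by \<open>cnj (\<gamma>' t)\<close> so that the initial tangent becomes \<open>1\<close>. Admissibility then says
  that the rotated tangent \<open>z u\<close> is a unit vector at angle at most \<open>u - t\<close> from the real axis.
  Rotating further by \<open>\<mp>p\<close> with \<open>p = (s - t)/2\<close>, the imaginary parts of \<open>z u\<close> are bounded by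
  \<open>\<plusminus>sin (u - t - p)\<close>, which integrate to zero over \<open>[t, s]\<close>. Hence the integral
  \<open>(\<gamma> s - \<gamma> t) * cnj (\<gamma>' t)\<close> of \<open>z\<close> lies in the sector of half-opening \<open>p\<close> around the
  real axis; it is nonzero because \<open>Re (z u) \<ge> cos (u - t)\<close> integrates to \<open>sin (s - t) > 0\<close>.\<close>

lemma inner_complex_eq_Re_mult_cnj: "x \<bullet> y = Re (x * cnj y)"
  by (simp add: inner_complex_def)

lemma vec_angle_le_iff:
  fixes u v :: complex
  assumes "u \<noteq> 0" "v \<noteq> 0" "0 \<le> a" "a \<le> pi"
  shows "vec_angle u v \<le> a \<longleftrightarrow> norm u * norm v * cos a \<le> u \<bullet> v"
proof -
  define x where "x = (u \<bullet> v) / (norm u * norm v)"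
  have uv: "0 < norm u * norm v" using assms(1,2) by simp
  have "\<bar>x\<bar> \<le> 1"
    using Cauchy_Schwarz_ineq2[of u v] uv by (simp add: x_def abs_divide divide_le_eq_1)
  then have "vec_angle u v \<le> a \<longleftrightarrow> arccos x \<le> arccos (cos a)"
    by (simp add: vec_angle_def x_def arccos_cos assms(3,4))
  also have "\<dots> \<longleftrightarrow> cos a \<le> x"
    by (rule arccos_le_mono) (use \<open>\<bar>x\<bar> \<le> 1\<close> in auto)
  also have "\<dots> \<longleftrightarrow> norm u * norm v * cos a \<le> u \<bullet> v"
    using uv by (simp add: x_def pos_le_divide_eq mult.commute)
  finally show ?thesis .
qed

lemma Im_mult_cis_le_sin:
  fixes z :: complex
  assumes "norm z = 1" "cos a \<le> Re z" "0 \<le> a" "a \<le> 2 * p" "p \<le> pi / 2"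
  shows "Im (z * cis (- p)) \<le> sin (a - p)"
proof -
  define q where "q = Arg z"
  have "z \<noteq> 0"
    using assms(1) by auto
  then have z: "z = cis q"
    using cis_Arg[of z] assms(1) by (simp add: q_def sgn_div_norm)
  have "- pi < q" "q \<le> pi"
    unfolding q_def by (simp_all add: Arg_bounded)
  moreover have "cos a \<le> cos \<bar>q\<bar>"
    using assms(2) z by (simp add: abs_if)
  ultimately have "\<bar>q\<bar> \<le> a"
    using cos_mono_le_eq[of a "\<bar>q\<bar>"] assms(3-5) by auto
  then have q: "- a \<le> q" "q \<le> a"
    by auto
  have "0 \<le> sin ((a - q) / 2)"
    using q assms(4,5) by (intro sin_ge_zero) auto
  moreover have "0 \<le> cos ((a + q) / 2 - p)"
    using q assms(3-5) by (intro cos_ge_zero) (simp_all add: field_simps)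
  ultimately have "0 \<le> 2 * sin ((a - q) / 2) * cos ((a + q) / 2 - p)"
    by simp
  also have "\<dots> = sin (a - p) - sin (q - p)"
    using sin_diff_sin[of "a - p" "q - p"] by (simp add: field_simps)
  finally show ?thesis
    by (simp add: z cis_mult)
qed

lemma has_integral_cos_shift:
  fixes a t s :: real
  assumes "t \<le> s"
  shows "((\<lambda>u. cos (u - a)) has_integral sin (s - a) - sin (t - a)) {t..s}"
proof (rule fundamental_theorem_of_calculus[OF assms])
  fix x assume "x \<in> {t..s}"
  have "((\<lambda>u. sin (u - a)) has_real_derivative cos (x - a)) (at x within {t..s})"
    by (auto intro!: derivative_eq_intros)
  then show "((\<lambda>u. sin (u - a)) has_vector_derivative cos (x - a)) (at x within {t..s})"
    by (simp add: has_real_derivative_iff_has_vector_derivative)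
qed

lemma has_integral_sin_shift:
  fixes a t s :: real
  assumes "t \<le> s"
  shows "((\<lambda>u. sin (u - a)) has_integral cos (t - a) - cos (s - a)) {t..s}"
proof -
  have "((\<lambda>u. sin (u - a)) has_integral (\<lambda>u. - cos (u - a)) s - (\<lambda>u. - cos (u - a)) t) {t..s}"
  proof (rule fundamental_theorem_of_calculus[OF assms])
    fix x assume "x \<in> {t..s}"
    have "((\<lambda>u. - cos (u - a)) has_real_derivative sin (x - a)) (at x within {t..s})"
      by (auto intro!: derivative_eq_intros)
    then show "((\<lambda>u. - cos (u - a)) has_vector_derivative sin (x - a)) (at x within {t..s})"
      by (simp add: has_real_derivative_iff_has_vector_derivative)
  qed
  then show ?thesis by simp
qed

lemma norm_mult_cos_le_Re:
  fixes w :: complex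
  assumes "0 \<le> Re w" "0 \<le> p" "p \<le> pi / 2"
    and "Im (w * cis (- p)) \<le> 0" "0 \<le> Im (w * cis p)"
  shows "norm w * cos p \<le> Re w"
proof -
  have cos: "0 \<le> cos p"
    using assms(2,3) by (intro cos_ge_zero) auto
  have "\<bar>Im w\<bar> * cos p \<le> Re w * sin p"
    using assms(4,5) by (simp add: abs_if algebra_simps)
  then have "(\<bar>Im w\<bar> * cos p)\<^sup>2 \<le> (Re w * sin p)\<^sup>2"
    using cos by (intro power_mono) auto
  then have Im_le: "(Im w)\<^sup>2 * (cos p)\<^sup>2 \<le> (Re w)\<^sup>2 * (sin p)\<^sup>2"
    by (simp add: power_mult_distrib)
  have "(norm w * cos p)\<^sup>2 = (Re w)\<^sup>2 * (cos p)\<^sup>2 + (Im w)\<^sup>2 * (cos p)\<^sup>2"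
    by (simp add: cmod_power2 power_mult_distrib distrib_right)
  also have "\<dots> \<le> (Re w)\<^sup>2 * (cos p)\<^sup>2 + (Re w)\<^sup>2 * (sin p)\<^sup>2"
    using Im_le by simp
  also have "\<dots> = (Re w)\<^sup>2"
    by (simp flip: distrib_left)
  finally show ?thesis
    using assms(1) by (rule power2_le_imp_le)
qed

lemma has_integral_turning_unit_bounds:
  fixes z :: "real \<Rightarrow> complex"
  assumes "(z has_integral w) {t..s}" "t < s" "s < t + pi"
    and "\<And>u. u \<in> {t..s} \<Longrightarrow> norm (z u) = 1"
    and "\<And>u. u \<in> {t..s} \<Longrightarrow> cos (u - t) \<le> Re (z u)"
  shows "0 < Re w" "norm w * cos ((s - t) / 2) \<le> Re w"
proof -
  define p where "p = (s - t) / 2"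
  have p: "0 \<le> p" "p \<le> pi / 2" "s - (t + p) = p"
    using assms(2,3) by (simp_all add: p_def field_simps)
  have sin_zero: "((\<lambda>u. sin (u - (t + p))) has_integral 0) {t..s}"
    using has_integral_sin_shift[of t s "t + p"] assms(2) p(3) by simp
  have "Im (w * cis (- p)) \<le> 0"
  proof (rule has_integral_le[OF has_integral_Im[OF has_integral_mult_left[OF assms(1)]] sin_zero])
    fix u assume "u \<in> {t..s}"
    then show "Im (z u * cis (- p)) \<le> sin (u - (t + p))"
      using Im_mult_cis_le_sin[of "z u" "u - t" p] assms(4,5) p by (simp add: p_def diff_diff_eq)
  qed
  moreover have "- Im (w * cis p) \<le> 0"
  proof (rule has_integral_le[OF has_integral_neg[OF has_integral_Im[OF
        has_integral_mult_left[OF assms(1)]]] sin_zero])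
    fix u assume "u \<in> {t..s}"
    then have "Im (cnj (z u) * cis (- p)) \<le> sin (u - t - p)"
      using assms(4,5) p by (intro Im_mult_cis_le_sin) (auto simp: p_def)
    then show "- Im (z u * cis p) \<le> sin (u - (t + p))"
      by (simp add: diff_diff_eq)
  qed
  moreover have "sin (s - t) \<le> Re w"
    using has_integral_le[OF has_integral_cos_shift has_integral_Re[OF assms(1)] assms(5)] assms(2)
    by simp
  moreover have "0 < sin (s - t)"
    using assms(2,3) by (intro sin_gt_zero) auto
  ultimately show "0 < Re w" "norm w * cos ((s - t) / 2) \<le> Re w"
    using norm_mult_cos_le_Re[of w p] p by (simp_all add: p_def)
qed

lemma admissible_is_interval: "admissible \<gamma> I \<Longrightarrow> is_interval I"
  unfolding admissible_def by (elim conjE)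

lemma admissible_differentiable:
  "admissible \<gamma> I \<Longrightarrow> t \<in> I \<Longrightarrow> \<gamma> differentiable (at t within I)"
  unfolding admissible_def by (elim conjE) blast

lemma admissible_norm_tangent:
  "admissible \<gamma> I \<Longrightarrow> t \<in> I \<Longrightarrow> norm (vector_derivative \<gamma> (at t within I)) = 1"
  unfolding admissible_def by (elim conjE) blast

lemma admissible_vec_angle_tangent_le:
  "admissible \<gamma> I \<Longrightarrow> t \<in> I \<Longrightarrow> s \<in> I \<Longrightarrow> t < s \<Longrightarrow> s < t + pi \<Longrightarrow>
    vec_angle (vector_derivative \<gamma> (at s within I)) (vector_derivative \<gamma> (at t within I)) \<le> s - t"
  unfolding admissible_def by (elim conjE) blast

lemma admissible_atLeastAtMost_subset:
  assumes "admissible \<gamma> I" "t \<in> I" "s \<in> I"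
  shows "{t..s} \<subseteq> I"
  using admissible_is_interval[OF assms(1), unfolded is_interval_1, rule_format, OF assms(2,3)]
  by auto

lemma admissible_has_integral_tangent:
  assumes "admissible \<gamma> I" "t \<in> I" "s \<in> I" "t \<le> s"
  shows "((\<lambda>u. vector_derivative \<gamma> (at u within I)) has_integral \<gamma> s - \<gamma> t) {t..s}"
proof (rule fundamental_theorem_of_calculus[OF assms(4)])
  have sub: "{t..s} \<subseteq> I"
    using assms(1-3) by (rule admissible_atLeastAtMost_subset)
  fix x assume "x \<in> {t..s}"
  then have "(\<gamma> has_vector_derivative vector_derivative \<gamma> (at x within I)) (at x within I)"
    using admissible_differentiable[OF assms(1)] sub by (auto simp: vector_derivative_works)
  then show "(\<gamma> has_vector_derivative vector_derivative \<gamma> (at x within I)) (at x within {t..s})"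
    by (rule has_vector_derivative_within_subset[OF _ sub])
qed

lemma admissible_cos_le_inner_tangent:
  assumes "admissible \<gamma> I" "t \<in> I" "u \<in> I" "t \<le> u" "u < t + pi"
  shows "cos (u - t) \<le> vector_derivative \<gamma> (at u within I) \<bullet> vector_derivative \<gamma> (at t within I)"
proof -
  define D where "D x = vector_derivative \<gamma> (at x within I)" for x
  have unit: "norm (D t) = 1" "norm (D u) = 1"
    using admissible_norm_tangent[OF assms(1)] assms(2,3) by (simp_all add: D_def)
  show ?thesis
  proof (cases "u = t")
    case True
    then show ?thesis
      using unit by (simp add: D_def flip: power2_norm_eq_inner)
  next
    case False
    then have "vec_angle (D u) (D t) \<le> u - t"
      using admissible_vec_angle_tangent_le[OF assms(1-3)] assms(4,5) by (simp add: D_def)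
    moreover have "D u \<noteq> 0" "D t \<noteq> 0"
      using unit by auto
    ultimately show ?thesis
      using vec_angle_le_iff[of "D u" "D t" "u - t"] unit assms(4,5) by (simp add: D_def)
  qed
qed

theorem lemma16:
  fixes \<gamma> :: "real \<Rightarrow> complex" and I :: "real set" and s t :: real
  assumes "admissible \<gamma> I" and "t \<in> I" and "s \<in> I" and "t < s" and "s < t + pi"
  shows "vec_angle (vector_derivative \<gamma> (at t within I)) (\<gamma> s - \<gamma> t) \<le> (s - t) / 2"
proof -
  define D where "D u = vector_derivative \<gamma> (at u within I)" for u
  define w where "w = (\<gamma> s - \<gamma> t) * cnj (D t)"
  have sub: "{t..s} \<subseteq> I"
    using assms(1-3) by (rule admissible_atLeastAtMost_subset)
  have unit: "norm (D u) = 1" if "u \<in> I" for u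
    using admissible_norm_tangent[OF assms(1) that] by (simp add: D_def)
  have "((\<lambda>u. D u * cnj (D t)) has_integral w) {t..s}"
    using admissible_has_integral_tangent[OF assms(1-3)] assms(4)
    unfolding w_def D_def by (intro has_integral_mult_left) simp
  moreover have "norm (D u * cnj (D t)) = 1" if "u \<in> {t..s}" for u
    using unit sub that assms(2) by (auto simp: norm_mult)
  moreover have "cos (u - t) \<le> Re (D u * cnj (D t))" if "u \<in> {t..s}" for u
    using admissible_cos_le_inner_tangent[OF assms(1,2), of u] that sub assms(5)
    by (auto simp: D_def inner_complex_eq_Re_mult_cnj)
  ultimately have "0 < Re w" "norm w * cos ((s - t) / 2) \<le> Re w"
    using has_integral_turning_unit_bounds[of _ w t s] assms(4,5) by blast+
  moreover have "norm w = norm (\<gamma> s - \<gamma> t)"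
    using unit[OF assms(2)] by (simp add: w_def norm_mult)
  moreover have "Re w = D t \<bullet> (\<gamma> s - \<gamma> t)"
    by (simp add: w_def inner_complex_def algebra_simps)
  ultimately have pos: "0 < D t \<bullet> (\<gamma> s - \<gamma> t)"
    and bound: "norm (D t) * norm (\<gamma> s - \<gamma> t) * cos ((s - t) / 2) \<le> D t \<bullet> (\<gamma> s - \<gamma> t)"
    using unit[OF assms(2)] by simp_all
  have nonzero: "D t \<noteq> 0" "\<gamma> s - \<gamma> t \<noteq> 0"
    using unit[OF assms(2)] pos by auto
  have "vec_angle (D t) (\<gamma> s - \<gamma> t) \<le> (s - t) / 2"
    by (rule vec_angle_le_iff[THEN iffD2]) (use nonzero bound assms(4,5) in auto)
  then show ?thesis
    by (simp add: D_def)
qed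

end
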